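(* Let $p$ be prime, $\mathbb{F}=\mathbb{F}_p$, $n\le N$, and let $\lambda=(\lambda_0,\lambda_1,\dots,\lambda_k)$ be an ordered partition of $[n]$ into pairwise disjoint, possibly empty sets. For $y_1,\dots,y_k\in\mathbb{F}^N$ let $P(x)=\mathcal{F}_{\lambda}(x,y_1,\dots,y_k)$. Then for every $z\in\mathbb{F}^N$, $$P_z(x)=\sum_{A\subseteq\lambda_0,\ A\ne\lambda_0}\mathcal{F}_{(A,\lambda_0\setminus A,\lambda_1,\dots,\lambda_k)}(x,z,y_1,\dots,y_k).$$
   Context: For an ordered partition $\mu=(\mu_0,\dots,\mu_k)$ of $[n]$ (blocks pairwise disjoint, possibly empty, union $[n]$) and vectors $r_0,\dots,r_k\in\mathbb{F}^N$, define $\mathcal{F}_{\mu}(r_0,\dots,r_k)=\sum_{1\le j_1<j_2<\dots<j_n\le N}\prod_{i=1}^n w_i(j_i)$, where $w_i=r_t$ for the unique $t$ with $i\in\mu_t$, and $r(j)$ denotes the $j$-th coordinate of $r$. The derivative is $P_z(x)=P(x+z)-P(x)$. *)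

theory Defs
  imports Main "HOL-Library.FuncSet" "HOL-Library.Cardinality" "HOL-Computational_Algebra.Primes"
begin

definition is_opart :: "nat \<Rightarrow> nat set list \<Rightarrow> bool" where
  "is_opart n mu \<longleftrightarrow>
     (\<forall>s<length mu. \<forall>t<length mu. s \<noteq> t \<longrightarrow> mu ! s \<inter> mu ! t = {}) \<and>
     \<Union> (set mu) = {1..n}"

definition blk_idx :: "nat set list \<Rightarrow> nat \<Rightarrow> nat" where
  "blk_idx mu i = (THE t. t < length mu \<and> i \<in> mu ! t)"

text \<open>F_mu(r_0,...,r_k) = sum over 1 <= j_1 < ... < j_n <= N of prod_i w_i(j_i),
  vectors in F^N being functions on coordinates 1..N.\<close>
definition Fmu :: "nat \<Rightarrow> nat \<Rightarrow> nat set list \<Rightarrow> (nat \<Rightarrow> 'a::comm_ring_1) list \<Rightarrow> 'a" where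
  "Fmu n N mu rs =
     (\<Sum>j \<in> {j \<in> {1..n} \<rightarrow>\<^sub>E {1..N}. strict_mono_on {1..n} j}.
        \<Prod>i\<in>{1..n}. (rs ! blk_idx mu i) (j i))"

end

theory Submission
  imports Defs "HOL-Library.Disjoint_Sets"
begin

text \<open>Grouping the product that defines \<open>Fmu\<close> by blocks, only the factor of the block
  \<open>\<lambda>\<^sub>0\<close> involves the first vector. Expanding \<open>\<Prod>i\<in>\<lambda>\<^sub>0. (x + z) (j i)\<close> over the subsets
  \<open>A \<subseteq> \<lambda>\<^sub>0\<close> turns \<open>Fmu (\<lambda>\<^sub>0 # \<lambda>s) ((x + z) # ys)\<close> into the sum over all such \<open>A\<close> of
  \<open>Fmu (A # (\<lambda>\<^sub>0 - A) # \<lambda>s) (x # z # ys)\<close>, and the summand for \<open>A = \<lambda>\<^sub>0\<close> is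
  \<open>Fmu (\<lambda>\<^sub>0 # \<lambda>s) (x # ys)\<close>.\<close>

lemma is_opart_iff:
  "is_opart n mu \<longleftrightarrow> disjoint_family_on ((!) mu) {..<length mu} \<and> \<Union> (set mu) = {1..n}"
  by (auto simp: is_opart_def disjoint_family_on_def)

lemma disjoint_family_on_nth_Cons:
  "disjoint_family_on ((!) (a # mu)) {..<length (a # mu)} \<longleftrightarrow>
     disjoint_family_on ((!) mu) {..<length mu} \<and> (\<forall>t<length mu. a \<inter> mu ! t = {})"
  (is "?L \<longleftrightarrow> ?R")
proof
  assume L: ?L
  show ?R
  proof (intro conjI allI impI)
    show "disjoint_family_on ((!) mu) {..<length mu}"
      unfolding disjoint_family_on_def
      using L[unfolded disjoint_family_on_def, rule_format, of "Suc _" "Suc _"] by simp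
    show "a \<inter> mu ! t = {}" if "t < length mu" for t
      using L[unfolded disjoint_family_on_def, rule_format, of 0 "Suc t"] that by simp
  qed
next
  assume ?R
  then show ?L
    unfolding disjoint_family_on_def by (auto simp: nth_Cons' Int_commute split: if_splits)
qed

lemma is_opart_split_head:
  assumes "is_opart n (a # mu)" and "b \<subseteq> a"
  shows "is_opart n (b # (a - b) # mu)"
  using assms unfolding is_opart_iff disjoint_family_on_nth_Cons
  by (auto simp: less_Suc_eq_0_disj) blast

lemma prod_lessThan_length_Cons:
  "(\<Prod>t<length (a # xs). f t) = f 0 * (\<Prod>t<length xs. f (Suc t))"
  by (simp only: length_Cons prod.lessThan_Suc_shift)

lemma blk_idx_eqI:
  assumes "disjoint_family_on ((!) mu) {..<length mu}" and "t < length mu" and "i \<in> mu ! t"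
  shows "blk_idx mu i = t"
  unfolding blk_idx_def
proof (rule the_equality)
  fix s assume "s < length mu \<and> i \<in> mu ! s"
  with assms show "s = t" by (auto simp: disjoint_family_on_def)
qed (use assms in simp)

lemma prod_blk_idx_eq_prod_blocks:
  assumes "is_opart n mu"
  shows "(\<Prod>i\<in>{1..n}. (rs ! blk_idx mu i) (j i)) = (\<Prod>t<length mu. \<Prod>i\<in>mu ! t. (rs ! t) (j i))"
proof -
  have disj: "disjoint_family_on ((!) mu) {..<length mu}"
    and cover: "(\<Union>t<length mu. mu ! t) = {1..n}"
    using assms by (auto simp: is_opart_iff set_conv_nth)
  have fin: "finite (mu ! t)" if "t < length mu" for t
    using cover that finite_subset[of "mu ! t" "{1..n}"] by blast
  have "(\<Prod>i\<in>{1..n}. (rs ! blk_idx mu i) (j i))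
      = (\<Prod>t<length mu. \<Prod>i\<in>mu ! t. (rs ! blk_idx mu i) (j i))"
    unfolding cover[symmetric]
    by (rule prod.UNION_disjoint) (use fin disj in \<open>auto simp: disjoint_family_on_def\<close>)
  also have "\<dots> = (\<Prod>t<length mu. \<Prod>i\<in>mu ! t. (rs ! t) (j i))"
    by (intro prod.cong refl) (simp add: blk_idx_eqI[OF disj])
  finally show ?thesis .
qed

lemma Fmu_eq_sum_prod_blocks:
  assumes "is_opart n mu"
  shows "Fmu n N mu rs = (\<Sum>j \<in> {j \<in> {1..n} \<rightarrow>\<^sub>E {1..N}. strict_mono_on {1..n} j}.
                            \<Prod>t<length mu. \<Prod>i\<in>mu ! t. (rs ! t) (j i))"
  unfolding Fmu_def prod_blk_idx_eq_prod_blocks[OF assms] ..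

text \<open>The identity holds over any commutative ring.\<close>

theorem lemma2p1:
  fixes n N k :: nat
    and lam0 :: "nat set" and lams :: "nat set list"
    and ys :: "(nat \<Rightarrow> 'a::{field,finite}) list"
    and x z :: "nat \<Rightarrow> 'a"
  assumes "prime CARD('a)"
    and "n \<le> N"
    and "length lams = k"
    and "is_opart n (lam0 # lams)"
    and "length ys = k"
  shows "Fmu n N (lam0 # lams) ((\<lambda>j. x j + z j) # ys) - Fmu n N (lam0 # lams) (x # ys)
       = (\<Sum>A \<in> {A. A \<subseteq> lam0 \<and> A \<noteq> lam0}. Fmu n N (A # (lam0 - A) # lams) (x # z # ys))"
proof -
  define J where "J = {j \<in> {1..n} \<rightarrow>\<^sub>E {1..N}. strict_mono_on {1..n} j}"
  define T where "T j = (\<Prod>t<length lams. \<Prod>i\<in>lams ! t. (ys ! t) (j i))" for j :: "nat \<Rightarrow> nat"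
  define F where "F A = Fmu n N (A # (lam0 - A) # lams) (x # z # ys)" for A
  have fin: "finite lam0"
    using assms(4) finite_subset[of lam0 "{1..n}"] by (auto simp: is_opart_def)
  have head: "Fmu n N (lam0 # lams) (r # ys) = (\<Sum>j\<in>J. (\<Prod>i\<in>lam0. r (j i)) * T j)" for r
    unfolding Fmu_eq_sum_prod_blocks[OF assms(4)] prod_lessThan_length_Cons
    by (simp add: J_def T_def)
  have split: "F A = (\<Sum>j\<in>J. (\<Prod>i\<in>A. x (j i)) * (\<Prod>i\<in>lam0 - A. z (j i)) * T j)"
    if "A \<subseteq> lam0" for A
    unfolding F_def Fmu_eq_sum_prod_blocks[OF is_opart_split_head[OF assms(4) that]]
      prod_lessThan_length_Cons
    by (simp add: J_def T_def mult.assoc)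
  have "Fmu n N (lam0 # lams) ((\<lambda>j. x j + z j) # ys) = (\<Sum>A\<in>Pow lam0. F A)"
    unfolding head prod_add[OF fin] sum_distrib_right
    by (subst sum.swap) (simp add: split)
  also have "\<dots> = F lam0 + (\<Sum>A \<in> {A. A \<subseteq> lam0 \<and> A \<noteq> lam0}. F A)"
    using fin by (subst sum.remove[of _ lam0]) (auto intro!: sum.cong)
  also have "F lam0 = Fmu n N (lam0 # lams) (x # ys)"
    by (simp add: split head)
  finally show ?thesis by (simp add: F_def)
qed

end
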